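(* Let $P=\langle \mathit{Init}(X),\mathit{Tr}(X,X'),\mathit{Bad}(X)\rangle$ be a safety problem over $\mathcal{T}$, and suppose the Quic3 rules are applied to $P$ in any order starting from the initial state. Then in every step of Quic3, for every $k<N$, the sequence $\forall Q_1,\dots,\forall Q_k$ is an interpolation sequence of length $k$ for $P$.
   Context: $\mathcal{T}$ is the combined first-order theory of linear integer arithmetic and arrays, with sorts $\mathsf{int}$ and $\mathsf{array}$ (array indices and values have sort $\mathsf{int}$; $\mathsf{sel}$, $\mathit{store}$ are array read/write). Formulas may contain uninterpreted constants; among them are Skolem constants $\mathit{SK}=\{sk_i: i\in\mathbb{N}\}$ of sort $\mathsf{int}$. Variables of sort $\mathsf{int}$ are named $v_i$. A substitution is a partial sort-respecting map from variables to terms; $\varphi\sigma$ is its application; $\emptyset$ is the empty substitution. The Skolem substitution $\mathit{sk}$ maps $v_i\mapsto sk_i$; $L_{\mathit{sk}}$ denotes $L\,\mathit{sk}$. $\mathit{Const}(\varphi)$, $\mathit{FVars}(\varphi)$ denote uninterpreted constants and free variables; $\forall\varphi$ / $\exists\varphi$ are universal / existential closures over all free variables; $\varphi\Rightarrow\psi$ means $\varphi\to\psi$ is valid in $\mathcal{T}$. For a set $U$ of constants and formula $\varphi$, $\mathit{abs}(U,\varphi)=(\psi,\sigma)$: $\psi$ is obtained from $\varphi$ by replacing each constant of $U$ by a variable not free in $\varphi$, each $sk_i\in U$ being replaced by $v_i$; $\mathit{dom}(\sigma)=\mathit{FVars}(\psi)\setminus\mathit{FVars}(\varphi)$, $\psi\sigma=\varphi$,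 and no constant of $U$ occurs in $\psi$. For ground $\varphi$, $\exists U\cdot\varphi$ denotes $\exists\psi$ with $(\psi,\_)=\mathit{abs}(U,\varphi)$. A partial model-based projection $\textsc{pMbp}(U,\varphi,M)=(\psi,W)$ (for ground $\varphi$, $M\models\varphi$, $U\subseteq\mathit{Const}(\varphi)$) satisfies: $\psi$ is a conjunction of ground literals; $W\subseteq U$, $\mathit{Const}(\psi)\subseteq\mathit{Const}(\varphi)\setminus(U\setminus W)$; $\psi\Rightarrow\exists(U\setminus W)\cdot\varphi$; $M\models\psi$; for fixed $U,\varphi$ only finitely many values arise over all models $M$; $W$ contains no array constant. For ground $A,B$ with $A\wedge B$ unsatisfiable, $\textsc{Itp}(A,B)$ is an interpolant: a ground formula $I$ with $\mathit{Const}(I)\subseteq\mathit{Const}(A)\cap\mathit{Const}(B)$, $A\Rightarrow I$ and $I\Rightarrow\neg B$. A safety problem $\langle \mathit{Init}(X),\mathit{Tr}(X,X'),\mathit{Bad}(X)\rangle$ has a finite set $X$ of constants disjoint from $\mathit{SK}$, primed copy $X'=\{a'\mid a\in X\}$, and quantifier-free ground $\mathit{Init},\mathit{Bad}$ over $X$ and $\mathit{Tr}$ over $X\cup X'$. $\varphi'$ replaces each $a\in X$ by $a'$ in $\varphi$, and for $L'$ a formula over $X'\cup\mathit{SK}$, $L$ denotes its unprimed version. $\mathcal{F}(A)=(A(X)\wedge\mathit{Tr}(X,X'))\vee\mathit{Init}(X')$. An interpolation sequence of length $k$ for $P$ is a sequence of formulas $I_1(X),\dots,I_k(X)$ with $\mathit{Init}(X)\Rightarrow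 I_1(X)$, $I_j(X)\wedge\mathit{Tr}(X,X')\Rightarrow I_{j+1}(X')$ for $1\le j\le k-1$, and $I_k(X)\Rightarrow\neg\mathit{Bad}(X)$. A frame $Q$ is a finite set of pairs $(\ell,\sigma)$, $\ell$ quantifier-free over $X$ with free variables of sort $\mathsf{int}$, $\sigma$ a substitution with $\mathit{FVars}(\ell)\subseteq\mathit{dom}(\sigma)$ and range in $X'\cup\mathit{SK}$; $\forall Q$ is the set (read as conjunction) of $\forall\ell$ and $\mathit{qi}(Q)$ the conjunction of $\ell\sigma$ over $(\ell,\sigma)\in Q$. A proof obligation (POB) is $\langle m,\sigma,i\rangle$ with $m$ a conjunction of literals over $X$ with free $\mathsf{int}$ variables, $m\sigma$ ground, $i\in\mathbb N$. Quic3 maintains a POB queue $\mathcal Q$, a level $N$ and frames $Q_0,Q_1,\dots$; initially $\mathcal Q=\emptyset$, $N=0$, $Q_0=\{(\mathit{Init},\emptyset)\}$, $Q_i=\emptyset$ for $i>0$. It applies, in any order, the rules: (Safe) if some $i<N$ has $\forall Q_i\subseteq\forall Q_{i+1}$, return Safe; (Cex) if some $\langle m,\sigma,0\rangle\in\mathcal Q$, return Cex; (Unfold) if $\mathit{qi}(Q_N)\Rightarrow\neg\mathit{Bad}$, set $N\gets N+1$; (Candidate) if $m$ is a monomial with $m\Rightarrow\mathit{qi}(Q_N)\wedge\mathit{Bad}$, add $\langle m,\emptyset,N\rangle$ to $\mathcal Q$; (Predecessor) if $\langle m,\xi,i+1\rangle\in\mathcal Q$ and $M\models\mathit{qi}(Q_i)\wedge\mathit{Tr}\wedge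 m'_{\mathit{sk}}$, add $\langle\psi,\sigma,i\rangle$ where $(\psi,\sigma)=\mathit{abs}(U,\varphi)$ and $(\varphi,U)=\textsc{pMbp}(X'\cup\mathit{SK},\mathit{Tr}\wedge m'_{\mathit{sk}},M)$; (NewLemma) for $0\le i<N$ and $\langle m,\sigma,i+1\rangle\in\mathcal Q$ with $\mathcal F(\mathit{qi}(Q_i))\wedge m'_{\mathit{sk}}$ unsatisfiable, let $L'=\textsc{Itp}(\mathcal F(\mathit{qi}(Q_i)),m'_{\mathit{sk}})$ and $(\ell,\_)=\mathit{abs}(\mathit{SK},L)$, and add $(\ell,\sigma)$ to $Q_j$ for all $j\le i+1$; (Push) for $0\le i<N$ and $((\varphi\vee\psi),\sigma)\in Q_i$, if $(\varphi,\sigma)\notin Q_{i+1}$, $\mathit{Init}\Rightarrow\forall\varphi$ and $(\forall\varphi)\wedge\forall Q_i\wedge\mathit{qi}(Q_i)\wedge\mathit{Tr}\Rightarrow\forall\varphi'$, add $(\varphi,\sigma)$ to $Q_j$ for all $j\le i+1$. *)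

theory Defs
  imports Main
begin

section \<open>Syntax of the combined theory T (linear integer arithmetic + arrays)\<close>

datatype srt = SInt | SArr

datatype var = IV nat | AV nat

text \<open>Uninterpreted constants: unprimed constants (Cn), their primed copies (Pr),
  and the Skolem constants sk_i (Sk i, sort int).\<close>
datatype cnst = Cn srt nat | Pr srt nat | Sk nat

datatype trm =
    Var var | Cst cnst | Num int | Add trm trm | Scale int trm
  | Sel trm trm | Store trm trm trm

datatype fm =
    TT | FF | Le trm trm | Lt trm trm | Eq trm trm
  | Neg fm | And fm fm | Or fm fm | Imp fm fm | All var fm | Ex var fm

type_synonym subst = "var \<Rightarrow> trm option"

fun vsort :: "var \<Rightarrow> srt" where
  "vsort (IV _) = SInt" | "vsort (AV _) = SArr"

fun csort :: "cnst \<Rightarrow> srt" where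
  "csort (Cn s _) = s" | "csort (Pr s _) = s" | "csort (Sk _) = SInt"

fun wt :: "trm \<Rightarrow> srt \<Rightarrow> bool" where
  "wt (Var v) s = (vsort v = s)"
| "wt (Cst c) s = (csort c = s)"
| "wt (Num _) s = (s = SInt)"
| "wt (Add a b) s = (s = SInt \<and> wt a SInt \<and> wt b SInt)"
| "wt (Scale _ a) s = (s = SInt \<and> wt a SInt)"
| "wt (Sel a i) s = (s = SInt \<and> wt a SArr \<and> wt i SInt)"
| "wt (Store a i x) s = (s = SArr \<and> wt a SArr \<and> wt i SInt \<and> wt x SInt)"

fun wff :: "fm \<Rightarrow> bool" where
  "wff TT = True" | "wff FF = True"
| "wff (Le a b) = (wt a SInt \<and> wt b SInt)"
| "wff (Lt a b) = (wt a SInt \<and> wt b SInt)"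
| "wff (Eq a b) = (\<exists>s. wt a s \<and> wt b s)"
| "wff (Neg p) = wff p"
| "wff (And p q) = (wff p \<and> wff q)"
| "wff (Or p q) = (wff p \<and> wff q)"
| "wff (Imp p q) = (wff p \<and> wff q)"
| "wff (All _ p) = wff p"
| "wff (Ex _ p) = wff p"

fun fvt :: "trm \<Rightarrow> var set" where
  "fvt (Var v) = {v}" | "fvt (Cst _) = {}" | "fvt (Num _) = {}"
| "fvt (Add a b) = fvt a \<union> fvt b" | "fvt (Scale _ a) = fvt a"
| "fvt (Sel a i) = fvt a \<union> fvt i" | "fvt (Store a i x) = fvt a \<union> fvt i \<union> fvt x"

fun fv :: "fm \<Rightarrow> var set" where
  "fv TT = {}" | "fv FF = {}"
| "fv (Le a b) = fvt a \<union> fvt b" | "fv (Lt a b) = fvt a \<union> fvt b"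
| "fv (Eq a b) = fvt a \<union> fvt b"
| "fv (Neg p) = fv p" | "fv (And p q) = fv p \<union> fv q"
| "fv (Or p q) = fv p \<union> fv q" | "fv (Imp p q) = fv p \<union> fv q"
| "fv (All v p) = fv p - {v}" | "fv (Ex v p) = fv p - {v}"

fun ct :: "trm \<Rightarrow> cnst set" where
  "ct (Var _) = {}" | "ct (Cst c) = {c}" | "ct (Num _) = {}"
| "ct (Add a b) = ct a \<union> ct b" | "ct (Scale _ a) = ct a"
| "ct (Sel a i) = ct a \<union> ct i" | "ct (Store a i x) = ct a \<union> ct i \<union> ct x"

fun cf :: "fm \<Rightarrow> cnst set" where
  "cf TT = {}" | "cf FF = {}"
| "cf (Le a b) = ct a \<union> ct b" | "cf (Lt a b) = ct a \<union> ct b"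
| "cf (Eq a b) = ct a \<union> ct b"
| "cf (Neg p) = cf p" | "cf (And p q) = cf p \<union> cf q"
| "cf (Or p q) = cf p \<union> cf q" | "cf (Imp p q) = cf p \<union> cf q"
| "cf (All _ p) = cf p" | "cf (Ex _ p) = cf p"

fun qfree :: "fm \<Rightarrow> bool" where
  "qfree (All _ _) = False" | "qfree (Ex _ _) = False"
| "qfree (Neg p) = qfree p" | "qfree (And p q) = (qfree p \<and> qfree q)"
| "qfree (Or p q) = (qfree p \<and> qfree q)" | "qfree (Imp p q) = (qfree p \<and> qfree q)"
| "qfree _ = True"

definition fm_ground :: "fm \<Rightarrow> bool" where
  "fm_ground p \<longleftrightarrow> qfree p \<and> fv p = {}"

fun is_atom :: "fm \<Rightarrow> bool" where
  "is_atom (Le _ _) = True" | "is_atom (Lt _ _) = True" | "is_atom (Eq _ _) = True"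
| "is_atom _ = False"

fun is_literal :: "fm \<Rightarrow> bool" where
  "is_literal (Neg p) = is_atom p" | "is_literal p = is_atom p"

definition monomial :: "fm \<Rightarrow> bool" where
  "monomial m \<longleftrightarrow> (\<exists>ls. list_all is_literal ls \<and> m = foldr And ls TT)"

fun substt :: "subst \<Rightarrow> trm \<Rightarrow> trm" where
  "substt \<sigma> (Var v) = (case \<sigma> v of Some t \<Rightarrow> t | None \<Rightarrow> Var v)"
| "substt \<sigma> (Cst c) = Cst c" | "substt \<sigma> (Num n) = Num n"
| "substt \<sigma> (Add a b) = Add (substt \<sigma> a) (substt \<sigma> b)"
| "substt \<sigma> (Scale k a) = Scale k (substt \<sigma> a)"
| "substt \<sigma> (Sel a i) = Sel (substt \<sigma> a) (substt \<sigma> i)"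
| "substt \<sigma> (Store a i x) = Store (substt \<sigma> a) (substt \<sigma> i) (substt \<sigma> x)"

fun subst :: "subst \<Rightarrow> fm \<Rightarrow> fm" where
  "subst \<sigma> TT = TT" | "subst \<sigma> FF = FF"
| "subst \<sigma> (Le a b) = Le (substt \<sigma> a) (substt \<sigma> b)"
| "subst \<sigma> (Lt a b) = Lt (substt \<sigma> a) (substt \<sigma> b)"
| "subst \<sigma> (Eq a b) = Eq (substt \<sigma> a) (substt \<sigma> b)"
| "subst \<sigma> (Neg p) = Neg (subst \<sigma> p)"
| "subst \<sigma> (And p q) = And (subst \<sigma> p) (subst \<sigma> q)"
| "subst \<sigma> (Or p q) = Or (subst \<sigma> p) (subst \<sigma> q)"
| "subst \<sigma> (Imp p q) = Imp (subst \<sigma> p) (subst \<sigma> q)"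
| "subst \<sigma> (All v p) = All v (subst (\<sigma>(v := None)) p)"
| "subst \<sigma> (Ex v p) = Ex v (subst (\<sigma>(v := None)) p)"

fun mapct :: "(cnst \<Rightarrow> cnst) \<Rightarrow> trm \<Rightarrow> trm" where
  "mapct f (Var v) = Var v" | "mapct f (Cst c) = Cst (f c)" | "mapct f (Num n) = Num n"
| "mapct f (Add a b) = Add (mapct f a) (mapct f b)"
| "mapct f (Scale k a) = Scale k (mapct f a)"
| "mapct f (Sel a i) = Sel (mapct f a) (mapct f i)"
| "mapct f (Store a i x) = Store (mapct f a) (mapct f i) (mapct f x)"

fun mapcf :: "(cnst \<Rightarrow> cnst) \<Rightarrow> fm \<Rightarrow> fm" where
  "mapcf f TT = TT" | "mapcf f FF = FF"
| "mapcf f (Le a b) = Le (mapct f a) (mapct f b)"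
| "mapcf f (Lt a b) = Lt (mapct f a) (mapct f b)"
| "mapcf f (Eq a b) = Eq (mapct f a) (mapct f b)"
| "mapcf f (Neg p) = Neg (mapcf f p)"
| "mapcf f (And p q) = And (mapcf f p) (mapcf f q)"
| "mapcf f (Or p q) = Or (mapcf f p) (mapcf f q)"
| "mapcf f (Imp p q) = Imp (mapcf f p) (mapcf f q)"
| "mapcf f (All v p) = All v (mapcf f p)"
| "mapcf f (Ex v p) = Ex v (mapcf f p)"

fun primec :: "cnst \<Rightarrow> cnst" where
  "primec (Cn s n) = Pr s n" | "primec c = c"

fun unprimec :: "cnst \<Rightarrow> cnst" where
  "unprimec (Pr s n) = Cn s n" | "unprimec c = c"

definition prime :: "fm \<Rightarrow> fm" where "prime = mapcf primec"
definition unprime :: "fm \<Rightarrow> fm" where "unprime = mapcf unprimec"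

fun replt :: "(cnst \<Rightarrow> var option) \<Rightarrow> trm \<Rightarrow> trm" where
  "replt \<rho> (Var v) = Var v"
| "replt \<rho> (Cst c) = (case \<rho> c of Some v \<Rightarrow> Var v | None \<Rightarrow> Cst c)"
| "replt \<rho> (Num n) = Num n"
| "replt \<rho> (Add a b) = Add (replt \<rho> a) (replt \<rho> b)"
| "replt \<rho> (Scale k a) = Scale k (replt \<rho> a)"
| "replt \<rho> (Sel a i) = Sel (replt \<rho> a) (replt \<rho> i)"
| "replt \<rho> (Store a i x) = Store (replt \<rho> a) (replt \<rho> i) (replt \<rho> x)"

fun replf :: "(cnst \<Rightarrow> var option) \<Rightarrow> fm \<Rightarrow> fm" where
  "replf \<rho> TT = TT" | "replf \<rho> FF = FF"
| "replf \<rho> (Le a b) = Le (replt \<rho> a) (replt \<rho> b)"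
| "replf \<rho> (Lt a b) = Lt (replt \<rho> a) (replt \<rho> b)"
| "replf \<rho> (Eq a b) = Eq (replt \<rho> a) (replt \<rho> b)"
| "replf \<rho> (Neg p) = Neg (replf \<rho> p)"
| "replf \<rho> (And p q) = And (replf \<rho> p) (replf \<rho> q)"
| "replf \<rho> (Or p q) = Or (replf \<rho> p) (replf \<rho> q)"
| "replf \<rho> (Imp p q) = Imp (replf \<rho> p) (replf \<rho> q)"
| "replf \<rho> (All v p) = All v (replf \<rho> p)"
| "replf \<rho> (Ex v p) = Ex v (replf \<rho> p)"

definition sk :: subst where
  "sk v = (case v of IV i \<Rightarrow> Some (Cst (Sk i)) | AV _ \<Rightarrow> None)"

definition SKs :: "cnst set" where "SKs = range Sk"

definition is_abs :: "cnst set \<Rightarrow> fm \<Rightarrow> fm \<times> subst \<Rightarrow> bool" where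
  "is_abs U \<phi> r \<longleftrightarrow> (case r of (\<psi>, \<sigma>) \<Rightarrow>
     (\<exists>\<rho>. (\<forall>c\<in>U. vsort (\<rho> c) = csort c \<and> \<rho> c \<notin> fv \<phi>)
         \<and> (\<forall>i. Sk i \<in> U \<longrightarrow> \<rho> (Sk i) = IV i)
         \<and> \<psi> = replf (\<lambda>c. if c \<in> U then Some (\<rho> c) else None) \<phi>)
     \<and> dom \<sigma> = fv \<psi> - fv \<phi> \<and> subst \<sigma> \<psi> = \<phi> \<and> cf \<psi> \<inter> U = {})"

definition lst :: "'a set \<Rightarrow> 'a list" where
  "lst S = (SOME xs. set xs = S \<and> distinct xs)"

definition allc :: "fm \<Rightarrow> fm" where "allc p = foldr All (lst (fv p)) p"
definition exc :: "fm \<Rightarrow> fm" where "exc p = foldr Ex (lst (fv p)) p"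

definition conjs :: "fm set \<Rightarrow> fm" where "conjs S = foldr And (lst S) TT"

text \<open>exists U . phi, for ground phi, w.r.t. the abstraction function absf.\<close>
definition exq :: "(cnst set \<Rightarrow> fm \<Rightarrow> fm \<times> subst) \<Rightarrow> cnst set \<Rightarrow> fm \<Rightarrow> fm" where
  "exq absf U \<phi> = exc (fst (absf U \<phi>))"

section \<open>Semantics (standard model of T: integers, arrays = functions int => int)\<close>

datatype val = IVal int | AVal "int \<Rightarrow> int"

fun toint :: "val \<Rightarrow> int" where "toint (IVal n) = n" | "toint (AVal _) = 0"
fun toarr :: "val \<Rightarrow> int \<Rightarrow> int" where "toarr (AVal f) = f" | "toarr (IVal _) = (\<lambda>_. 0)"

fun hassort :: "val \<Rightarrow> srt \<Rightarrow> bool" where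
  "hassort (IVal _) s = (s = SInt)" | "hassort (AVal _) s = (s = SArr)"

fun evt :: "(cnst \<Rightarrow> val) \<Rightarrow> (var \<Rightarrow> val) \<Rightarrow> trm \<Rightarrow> val" where
  "evt M e (Var v) = e v" | "evt M e (Cst c) = M c" | "evt M e (Num n) = IVal n"
| "evt M e (Add a b) = IVal (toint (evt M e a) + toint (evt M e b))"
| "evt M e (Scale k a) = IVal (k * toint (evt M e a))"
| "evt M e (Sel a i) = IVal (toarr (evt M e a) (toint (evt M e i)))"
| "evt M e (Store a i x) =
     AVal ((toarr (evt M e a))(toint (evt M e i) := toint (evt M e x)))"

fun evf :: "(cnst \<Rightarrow> val) \<Rightarrow> (var \<Rightarrow> val) \<Rightarrow> fm \<Rightarrow> bool" where
  "evf M e TT = True" | "evf M e FF = False"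
| "evf M e (Le a b) = (toint (evt M e a) \<le> toint (evt M e b))"
| "evf M e (Lt a b) = (toint (evt M e a) < toint (evt M e b))"
| "evf M e (Eq a b) = (evt M e a = evt M e b)"
| "evf M e (Neg p) = (\<not> evf M e p)"
| "evf M e (And p q) = (evf M e p \<and> evf M e q)"
| "evf M e (Or p q) = (evf M e p \<or> evf M e q)"
| "evf M e (Imp p q) = (evf M e p \<longrightarrow> evf M e q)"
| "evf M e (All v p) = (\<forall>x. hassort x (vsort v) \<longrightarrow> evf M (e(v := x)) p)"
| "evf M e (Ex v p) = (\<exists>x. hassort x (vsort v) \<and> evf M (e(v := x)) p)"

definition wsM :: "(cnst \<Rightarrow> val) \<Rightarrow> bool" where "wsM M \<longleftrightarrow> (\<forall>c. hassort (M c) (csort c))"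
definition wsE :: "(var \<Rightarrow> val) \<Rightarrow> bool" where "wsE e \<longleftrightarrow> (\<forall>v. hassort (e v) (vsort v))"

definition T_valid :: "fm \<Rightarrow> bool" where
  "T_valid p \<longleftrightarrow> (\<forall>M e. wsM M \<longrightarrow> wsE e \<longrightarrow> evf M e p)"

definition T_unsat :: "fm \<Rightarrow> bool" where
  "T_unsat p \<longleftrightarrow> \<not> (\<exists>M e. wsM M \<and> wsE e \<and> evf M e p)"

definition T_models :: "(cnst \<Rightarrow> val) \<Rightarrow> fm \<Rightarrow> bool" where
  "T_models M p \<longleftrightarrow> (\<forall>e. wsE e \<longrightarrow> evf M e p)"

definition safety_problem :: "cnst set \<Rightarrow> fm \<Rightarrow> fm \<Rightarrow> fm \<Rightarrow> bool" where
  "safety_problem X Init Tr Bad \<longleftrightarrow>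
     finite X \<and> (\<forall>c\<in>X. \<exists>s n. c = Cn s n)
     \<and> fm_ground Init \<and> wff Init \<and> cf Init \<subseteq> X
     \<and> fm_ground Bad \<and> wff Bad \<and> cf Bad \<subseteq> X
     \<and> fm_ground Tr \<and> wff Tr \<and> cf Tr \<subseteq> X \<union> primec ` X"

definition abs_spec :: "(cnst set \<Rightarrow> fm \<Rightarrow> fm \<times> subst) \<Rightarrow> bool" where
  "abs_spec absf \<longleftrightarrow> (\<forall>U \<phi>. fm_ground \<phi> \<longrightarrow> is_abs U \<phi> (absf U \<phi>))"

text \<open>Partial model-based projection (None = no result produced).\<close>
definition pmbp_spec :: "(cnst set \<Rightarrow> fm \<Rightarrow> fm \<times> subst)
    \<Rightarrow> (cnst set \<Rightarrow> fm \<Rightarrow> (cnst \<Rightarrow> val) \<Rightarrow> (fm \<times> cnst set) option) \<Rightarrow> bool" where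
  "pmbp_spec absf pmbp \<longleftrightarrow>
     (\<forall>U \<phi> M. fm_ground \<phi> \<and> wsM M \<and> T_models M \<phi> \<longrightarrow>
        (case pmbp U \<phi> M of None \<Rightarrow> True
         | Some (\<psi>, W) \<Rightarrow> monomial \<psi> \<and> fm_ground \<psi> \<and> wff \<psi> \<and> W \<subseteq> U
             \<and> cf \<psi> \<subseteq> cf \<phi> - (U - W)
             \<and> T_valid (Imp \<psi> (exq absf (U - W) \<phi>))
             \<and> T_models M \<psi> \<and> (\<forall>c\<in>W. csort c = SInt)))
   \<and> (\<forall>U \<phi>. finite {r. \<exists>M. wsM M \<and> T_models M \<phi> \<and> pmbp U \<phi> M = Some r})"

definition itp_spec :: "(fm \<Rightarrow> fm \<Rightarrow> fm option) \<Rightarrow> bool" where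
  "itp_spec itp \<longleftrightarrow> (\<forall>A B. fm_ground A \<and> fm_ground B \<and> T_unsat (And A B) \<longrightarrow>
     (case itp A B of None \<Rightarrow> True
      | Some I \<Rightarrow> fm_ground I \<and> wff I \<and> cf I \<subseteq> cf A \<inter> cf B
                 \<and> T_valid (Imp A I) \<and> T_valid (Imp I (Neg B))))"

definition interp_seq :: "cnst set \<Rightarrow> fm \<Rightarrow> fm \<Rightarrow> fm \<Rightarrow> nat \<Rightarrow> (nat \<Rightarrow> fm) \<Rightarrow> bool" where
  "interp_seq X Init Tr Bad k I \<longleftrightarrow>
     (\<forall>j\<in>{1..k}. cf (I j) \<subseteq> X)
     \<and> T_valid (Imp Init (I 1))
     \<and> (\<forall>j. 1 \<le> j \<and> j \<le> k - 1 \<longrightarrow> T_valid (Imp (And (I j) Tr) (prime (I (Suc j)))))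
     \<and> T_valid (Imp (I k) (Neg Bad))"

type_synonym frame = "(fm \<times> subst) set"

definition qi :: "frame \<Rightarrow> fm" where
  "qi Q = conjs ((\<lambda>(l, \<sigma>). subst \<sigma> l) ` Q)"

definition forallQ :: "frame \<Rightarrow> fm set" where
  "forallQ Q = (\<lambda>(l, \<sigma>). allc l) ` Q"

definition Ftr :: "fm \<Rightarrow> fm \<Rightarrow> fm \<Rightarrow> fm" where
  "Ftr Init Tr A = Or (And A Tr) (prime Init)"

definition msk :: "fm \<Rightarrow> fm" where "msk m = subst sk (prime m)"

definition is_pob :: "cnst set \<Rightarrow> fm \<times> subst \<times> nat \<Rightarrow> bool" where
  "is_pob X p \<longleftrightarrow> (case p of (m, \<sigma>, i) \<Rightarrow>
     monomial m \<and> cf m \<subseteq> X \<and> (\<forall>v\<in>fv m. vsort v = SInt) \<and> fm_ground (subst \<sigma> m))"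

datatype status = Running | SafeRes | CexRes

record q3state =
  stat :: status
  pobs :: "(fm \<times> subst \<times> nat) set"
  lvl :: nat
  frm :: "nat \<Rightarrow> frame"

definition q3init :: "fm \<Rightarrow> q3state" where
  "q3init Init = \<lparr> stat = Running, pobs = {}, lvl = 0,
                   frm = (\<lambda>i. if i = 0 then {(Init, Map.empty)} else {}) \<rparr>"

definition addlem :: "q3state \<Rightarrow> nat \<Rightarrow> fm \<times> subst \<Rightarrow> q3state" where
  "addlem s i x = s\<lparr> frm := (\<lambda>j. if j \<le> Suc i then insert x (frm s j) else frm s j) \<rparr>"

inductive q3step :: "cnst set \<Rightarrow> fm \<Rightarrow> fm \<Rightarrow> fm \<Rightarrow> (cnst set \<Rightarrow> fm \<Rightarrow> fm \<times> subst)
    \<Rightarrow> (cnst set \<Rightarrow> fm \<Rightarrow> (cnst \<Rightarrow> val) \<Rightarrow> (fm \<times> cnst set) option)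
    \<Rightarrow> (fm \<Rightarrow> fm \<Rightarrow> fm option) \<Rightarrow> q3state \<Rightarrow> q3state \<Rightarrow> bool"
  for X Init Tr Bad absf pmbp itp where
  Safe: "\<lbrakk> stat s = Running; i < lvl s; forallQ (frm s i) \<subseteq> forallQ (frm s (Suc i)) \<rbrakk>
         \<Longrightarrow> q3step X Init Tr Bad absf pmbp itp s (s\<lparr> stat := SafeRes \<rparr>)"
| Cex: "\<lbrakk> stat s = Running; (m, \<sigma>, 0) \<in> pobs s \<rbrakk>
         \<Longrightarrow> q3step X Init Tr Bad absf pmbp itp s (s\<lparr> stat := CexRes \<rparr>)"
| Unfold: "\<lbrakk> stat s = Running; T_valid (Imp (qi (frm s (lvl s))) (Neg Bad)) \<rbrakk>
         \<Longrightarrow> q3step X Init Tr Bad absf pmbp itp s (s\<lparr> lvl := Suc (lvl s) \<rparr>)"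
| Candidate: "\<lbrakk> stat s = Running; is_pob X (m, Map.empty, lvl s); wff m;
               T_valid (Imp m (And (qi (frm s (lvl s))) Bad)) \<rbrakk>
         \<Longrightarrow> q3step X Init Tr Bad absf pmbp itp s
               (s\<lparr> pobs := insert (m, Map.empty, lvl s) (pobs s) \<rparr>)"
| Predecessor: "\<lbrakk> stat s = Running; (m, \<xi>, Suc i) \<in> pobs s; wsM M;
               T_models M (And (qi (frm s i)) (And Tr (msk m)));
               pmbp (primec ` X \<union> SKs) (And Tr (msk m)) M = Some (\<phi>, W);
               absf W \<phi> = (\<psi>, \<sigma>) \<rbrakk>
         \<Longrightarrow> q3step X Init Tr Bad absf pmbp itp s (s\<lparr> pobs := insert (\<psi>, \<sigma>, i) (pobs s) \<rparr>)"
| NewLemma: "\<lbrakk> stat s = Running; i < lvl s; (m, \<sigma>, Suc i) \<in> pobs s;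
               T_unsat (And (Ftr Init Tr (qi (frm s i))) (msk m));
               itp (Ftr Init Tr (qi (frm s i))) (msk m) = Some L';
               absf SKs (unprime L') = (l, \<tau>) \<rbrakk>
         \<Longrightarrow> q3step X Init Tr Bad absf pmbp itp s (addlem s i (l, \<sigma>))"
| Push: "\<lbrakk> stat s = Running; i < lvl s; (Or \<phi> \<psi>, \<sigma>) \<in> frm s i;
           (\<phi>, \<sigma>) \<notin> frm s (Suc i);
           T_valid (Imp Init (allc \<phi>));
           T_valid (Imp (And (allc \<phi>) (And (conjs (forallQ (frm s i))) (And (qi (frm s i)) Tr)))
                        (prime (allc \<phi>))) \<rbrakk>
         \<Longrightarrow> q3step X Init Tr Bad absf pmbp itp s (addlem s i (\<phi>, \<sigma>))"

end

theory Submission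
  imports Defs
begin

text \<open>
  The theorem follows from an inductive invariant of the Quic3 states: the frames are finite
  and decreasing, every lemma (l, \<sigma>) is a quantifier-free formula over X whose free variables
  \<sigma> instantiates by constants of the right sort, Init implies every \<forall>l, the conjunction of
  \<forall>Q_j and Tr implies the primed \<forall>Q_(j+1), and \<forall>Q_j excludes Bad for every j < N.
  Since qi(Q) is a ground instance of \<forall>Q, Unfold preserves the last property, and Push, which
  checks relative inductiveness, the third. The real work is NewLemma: the interpolant L' of
  F(qi(Q_i)) and m'_sk only speaks about X' and the Skolem constants, and once these are
  abstracted into variables, every valuation of the variables is realised by a model of
  F(qi(Q_i)) with the same state. Hence \<forall>l holds after every Tr-step from a state of \<forall>Q_i
  (through the first disjunct of F) and in every initial state (through Init').
\<close>

section \<open>Semantics of renaming, substitution and closure\<close>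

lemma finite_fvt [simp]: "finite (fvt t)"
  by (induction t) auto

lemma finite_fv [simp]: "finite (fv p)"
  by (induction p) auto

lemma set_lst: "finite S \<Longrightarrow> set (lst S) = S"
  unfolding lst_def by (metis (mono_tags, lifting) finite_distinct_list someI_ex)

lemma evt_cong:
  "(\<forall>c\<in>ct t. M c = M' c) \<Longrightarrow> (\<forall>v\<in>fvt t. e v = e' v) \<Longrightarrow> evt M e t = evt M' e' t"
  by (induction t) auto

lemma evf_cong:
  "(\<forall>c\<in>cf p. M c = M' c) \<Longrightarrow> (\<forall>v\<in>fv p. e v = e' v) \<Longrightarrow> evf M e p = evf M' e' p"
proof (induction p arbitrary: e e')
  case (All v p)
  then have "evf M (e(v := x)) p = evf M' (e'(v := x)) p" for x
    by (intro All.IH) auto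
  then show ?case by simp
next
  case (Ex v p)
  then have "evf M (e(v := x)) p = evf M' (e'(v := x)) p" for x
    by (intro Ex.IH) auto
  then show ?case by simp
next
  case (And p q)
  have "evf M e p = evf M' e' p" "evf M e q = evf M' e' q"
    using And.prems by (intro And.IH; auto)+
  then show ?case by simp
next
  case (Or p q)
  have "evf M e p = evf M' e' p" "evf M e q = evf M' e' q"
    using Or.prems by (intro Or.IH; auto)+
  then show ?case by simp
next
  case (Imp p q)
  have "evf M e p = evf M' e' p" "evf M e q = evf M' e' q"
    using Imp.prems by (intro Imp.IH; auto)+
  then show ?case by simp
qed (simp_all add: ball_Un, (metis evt_cong)+)

lemma evt_mapct: "evt M e (mapct f t) = evt (M \<circ> f) e t"
  by (induction t) auto

lemma evf_mapcf: "evf M e (mapcf f p) = evf (M \<circ> f) e p"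
  by (induction p arbitrary: e) (auto simp: evt_mapct)

lemma cf_mapcf: "cf (mapcf f p) = f ` cf p"
proof -
  have "ct (mapct f t) = f ` ct t" for t
    by (induction t) auto
  then show ?thesis
    by (induction p) (auto simp: image_Un)
qed

lemma fv_mapcf [simp]: "fv (mapcf f p) = fv p"
proof -
  have "fvt (mapct f t) = fvt t" for t
    by (induction t) auto
  then show ?thesis
    by (induction p) auto
qed

lemma qfree_mapcf [simp]: "qfree (mapcf f p) = qfree p"
  by (induction p) auto

lemma fm_ground_mapcf [simp]: "fm_ground (mapcf f p) = fm_ground p"
  by (simp add: fm_ground_def)

lemma evf_prime: "evf M e (prime p) = evf (M \<circ> primec) e p"
  by (simp add: prime_def evf_mapcf)

lemma cf_unprime: "cf (unprime p) = unprimec ` cf p"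
  by (simp add: unprime_def cf_mapcf)

lemma csort_unprimec [simp]: "csort (unprimec c) = csort c"
  by (cases c) auto

lemma wsM_comp_unprimec: "wsM M \<Longrightarrow> wsM (M \<circ> unprimec)"
  unfolding wsM_def by (metis comp_apply csort_unprimec)

lemma unprimec_eq_Sk_iff: "unprimec c = Sk i \<longleftrightarrow> c = Sk i"
  by (cases c) auto

lemma evt_replt:
  "evt M e (replt \<rho> t) = evt (\<lambda>c. case \<rho> c of Some v \<Rightarrow> e v | None \<Rightarrow> M c) e t"
  by (induction t) (auto split: option.split)

lemma evf_replf:
  "qfree p \<Longrightarrow> evf M e (replf \<rho> p) = evf (\<lambda>c. case \<rho> c of Some v \<Rightarrow> e v | None \<Rightarrow> M c) e p"
  by (induction p) (auto simp: evt_replt)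

lemma qfree_replf [simp]: "qfree (replf \<rho> p) = qfree p"
  by (induction p) auto

lemma cf_replf: "cf (replf \<rho> p) \<subseteq> cf p"
proof -
  have "ct (replt \<rho> t) \<subseteq> ct t" for t
    by (induction t) (auto split: option.splits)
  then show ?thesis
    by (induction p) fastforce+
qed

lemma evt_substt:
  "evt M e (substt \<sigma> t) = evt M (\<lambda>v. case \<sigma> v of Some u \<Rightarrow> evt M e u | None \<Rightarrow> e v) t"
  by (induction t) (auto split: option.split)

lemma evf_subst:
  "qfree p \<Longrightarrow> evf M e (subst \<sigma> p) = evf M (\<lambda>v. case \<sigma> v of Some u \<Rightarrow> evt M e u | None \<Rightarrow> e v) p"
  by (induction p) (auto simp: evt_substt)

lemma qfree_subst [simp]: "qfree (subst \<sigma> p) = qfree p"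
  by (induction p arbitrary: \<sigma>) auto

lemma fv_subst:
  "qfree p \<Longrightarrow> fv (subst \<sigma> p) = (\<Union>v\<in>fv p. case \<sigma> v of Some u \<Rightarrow> fvt u | None \<Rightarrow> {v})"
proof -
  have "fvt (substt \<sigma> t) = (\<Union>v\<in>fvt t. case \<sigma> v of Some u \<Rightarrow> fvt u | None \<Rightarrow> {v})" for t
    by (induction t) (auto split: option.splits)
  then show "qfree p \<Longrightarrow> ?thesis"
    by (induction p) auto
qed

lemma cf_subst:
  "qfree p \<Longrightarrow> cf (subst \<sigma> p) = cf p \<union> (\<Union>v\<in>fv p. case \<sigma> v of Some u \<Rightarrow> ct u | None \<Rightarrow> {})"
proof -
  have "ct (substt \<sigma> t) = ct t \<union> (\<Union>v\<in>fvt t. case \<sigma> v of Some u \<Rightarrow> ct u | None \<Rightarrow> {})" for t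
    by (induction t) (auto split: option.splits)
  then show "qfree p \<Longrightarrow> ?thesis"
    by (induction p) auto
qed

lemma subst_empty [simp]: "subst Map.empty p = p"
proof -
  have "substt Map.empty t = t" for t
    by (induction t) auto
  then show ?thesis
    by (induction p) (auto simp: fun_upd_def)
qed

lemma wsE_upd: "wsE e \<Longrightarrow> hassort x (vsort v) \<Longrightarrow> wsE (e(v := x))"
  by (simp add: wsE_def)

lemma evf_foldr_All:
  assumes "wsE e"
  shows "evf M e (foldr All vs p) \<longleftrightarrow>
    (\<forall>e'. wsE e' \<longrightarrow> (\<forall>v. v \<notin> set vs \<longrightarrow> e' v = e v) \<longrightarrow> evf M e' p)"
  using assms
proof (induction vs arbitrary: e)
  case Nil
  then show ?case
    by (auto simp: fun_eq_iff[symmetric])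
next
  case (Cons v vs)
  have "evf M e (foldr All (v # vs) p) \<longleftrightarrow>
      (\<forall>x. hassort x (vsort v) \<longrightarrow> evf M (e(v := x)) (foldr All vs p))"
    by simp
  also have "\<dots> \<longleftrightarrow> (\<forall>x. hassort x (vsort v) \<longrightarrow>
      (\<forall>e'. wsE e' \<longrightarrow> (\<forall>w. w \<notin> set vs \<longrightarrow> e' w = (e(v := x)) w) \<longrightarrow> evf M e' p))"
    using Cons.IH[OF wsE_upd[OF Cons.prems]] by blast
  also have "\<dots> \<longleftrightarrow> (\<forall>e'. wsE e' \<longrightarrow> (\<forall>w. w \<notin> set (v # vs) \<longrightarrow> e' w = e w) \<longrightarrow> evf M e' p)"
    by (auto simp: wsE_def)
  finally show ?case .
qed

lemma evf_allc: "wsE e \<Longrightarrow> evf M e (allc p) \<longleftrightarrow> (\<forall>e'. wsE e' \<longrightarrow> evf M e' p)"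
proof
  assume e: "wsE e" and closed: "evf M e (allc p)"
  show "\<forall>e'. wsE e' \<longrightarrow> evf M e' p"
  proof (intro allI impI)
    fix e' assume e': "wsE e'"
    define e'' where "e'' v = (if v \<in> fv p then e' v else e v)" for v
    have "wsE e''"
      using e e' by (simp add: wsE_def e''_def)
    then have "evf M e'' p"
      using closed evf_foldr_All[OF e] by (simp add: allc_def set_lst e''_def)
    then show "evf M e' p"
      using evf_cong[of p M M e'' e'] by (simp add: e''_def)
  qed
qed (simp add: allc_def evf_foldr_All)

lemma cf_allc [simp]: "cf (allc p) = cf p"
proof -
  have "cf (foldr All vs p) = cf p" for vs
    by (induction vs) auto
  then show ?thesis
    by (simp add: allc_def)
qed

lemma
  assumes "finite S"
  shows evf_conjs: "evf M e (conjs S) \<longleftrightarrow> (\<forall>p\<in>S. evf M e p)"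
    and cf_conjs: "cf (conjs S) = (\<Union>p\<in>S. cf p)"
    and fv_conjs: "fv (conjs S) = (\<Union>p\<in>S. fv p)"
    and qfree_conjs: "qfree (conjs S) \<longleftrightarrow> (\<forall>p\<in>S. qfree p)"
proof -
  have "evf M e (foldr And ps TT) \<longleftrightarrow> (\<forall>p\<in>set ps. evf M e p)"
    and "cf (foldr And ps TT) = (\<Union>p\<in>set ps. cf p)"
    and "fv (foldr And ps TT) = (\<Union>p\<in>set ps. fv p)"
    and "qfree (foldr And ps TT) \<longleftrightarrow> (\<forall>p\<in>set ps. qfree p)" for ps
    by (induction ps) auto
  then show "evf M e (conjs S) \<longleftrightarrow> (\<forall>p\<in>S. evf M e p)"
    and "cf (conjs S) = (\<Union>p\<in>S. cf p)"
    and "fv (conjs S) = (\<Union>p\<in>S. fv p)"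
    and "qfree (conjs S) \<longleftrightarrow> (\<forall>p\<in>S. qfree p)"
    by (simp_all add: conjs_def set_lst[OF assms])
qed

lemma monomial_qfree: "monomial m \<Longrightarrow> qfree m"
proof -
  have "is_literal p \<Longrightarrow> qfree p" for p
    by (cases p rule: is_literal.cases) (auto elim: is_atom.elims)
  then have "list_all is_literal ps \<Longrightarrow> qfree (foldr And ps TT)" for ps
    by (induction ps) auto
  then show "monomial m \<Longrightarrow> qfree m"
    by (auto simp: monomial_def)
qed

section \<open>Frames, their closures and their instances\<close>

definition ground_inst :: "fm \<Rightarrow> subst \<Rightarrow> bool" where
  "ground_inst l \<sigma> \<longleftrightarrow> (\<forall>v\<in>fv l. \<exists>c. \<sigma> v = Some (Cst c) \<and> csort c = vsort v)"

definition frame_holds :: "(cnst \<Rightarrow> val) \<Rightarrow> frame \<Rightarrow> bool" where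
  "frame_holds M Q \<longleftrightarrow> (\<forall>(l, \<sigma>)\<in>Q. T_models M l)"

lemma frame_holds_antimono: "Q \<subseteq> Q' \<Longrightarrow> frame_holds M Q' \<Longrightarrow> frame_holds M Q"
  unfolding frame_holds_def by blast

lemma frame_holds_cong:
  assumes "\<forall>(l, \<sigma>)\<in>Q. cf l \<subseteq> C" and "\<forall>c\<in>C. M c = M' c"
  shows "frame_holds M Q \<longleftrightarrow> frame_holds M' Q"
proof -
  have "evf M e l = evf M' e l" if "(l, \<sigma>) \<in> Q" for l \<sigma> e
    using assms that by (intro evf_cong) fastforce+
  then show ?thesis
    unfolding frame_holds_def T_models_def by blast
qed

lemma evf_forallQ: "finite Q \<Longrightarrow> wsE e \<Longrightarrow> evf M e (conjs (forallQ Q)) \<longleftrightarrow> frame_holds M Q"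
  by (auto simp: forallQ_def frame_holds_def T_models_def evf_conjs evf_allc)

lemma cf_forallQ: "finite Q \<Longrightarrow> cf (conjs (forallQ Q)) = (\<Union>(l, \<sigma>)\<in>Q. cf l)"
  by (auto simp: forallQ_def cf_conjs)

lemma evf_subst_ground_inst:
  assumes l: "qfree l" "ground_inst l \<sigma>" and M: "wsM M" "T_models M l" and e: "wsE e"
  shows "evf M e (subst \<sigma> l)"
proof -
  define e' where "e' = (\<lambda>v. case \<sigma> v of Some u \<Rightarrow> evt M e u | None \<Rightarrow> e v)"
  define e'' where "e'' v = (if v \<in> fv l then e' v else e v)" for v
  have "hassort (e'' v) (vsort v)" for v
  proof (cases "v \<in> fv l")
    case True
    then obtain c where "\<sigma> v = Some (Cst c)" "csort c = vsort v"
      using l(2) by (auto simp: ground_inst_def)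
    then show ?thesis
      using True M(1) by (metis e''_def e'_def evt.simps(2) option.simps(5) wsM_def)
  next
    case False
    then show ?thesis
      using e by (simp add: e''_def wsE_def)
  qed
  then have "evf M e'' l"
    using M(2) by (simp add: T_models_def wsE_def)
  then have "evf M e' l"
    using evf_cong[of l M M e'' e'] by (simp add: e''_def)
  then show ?thesis
    using evf_subst[OF l(1)] by (simp add: e'_def)
qed

lemma evf_qi:
  assumes "finite Q" "\<forall>(l, \<sigma>)\<in>Q. qfree l \<and> ground_inst l \<sigma>"
    and "wsM M" "wsE e" "frame_holds M Q"
  shows "evf M e (qi Q)"
  using assms evf_subst_ground_inst
  by (fastforce simp: qi_def evf_conjs frame_holds_def)

lemma fm_ground_qi:
  assumes "finite Q" "\<forall>(l, \<sigma>)\<in>Q. qfree l \<and> ground_inst l \<sigma>"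
  shows "fm_ground (qi Q)"
proof -
  have "fv (subst \<sigma> l) = {}" if "(l, \<sigma>) \<in> Q" for l \<sigma>
    using assms that by (fastforce simp: fv_subst ground_inst_def)
  then show ?thesis
    using assms by (fastforce simp: fm_ground_def qi_def qfree_conjs fv_conjs)
qed

definition wf_inst :: "cnst set \<Rightarrow> fm \<Rightarrow> subst \<Rightarrow> bool" where
  "wf_inst X l \<sigma> \<longleftrightarrow> qfree l \<and> cf l \<subseteq> X \<and> ground_inst l \<sigma>"

text \<open>A model M interprets a pair of states: the constants of X give the pre-state and
  M \<circ> primec, which reads their primed copies, the post-state.\<close>

definition frame_consec :: "fm \<Rightarrow> frame \<Rightarrow> frame \<Rightarrow> bool" where
  "frame_consec Tr Q Q' \<longleftrightarrow> (\<forall>M e. wsM M \<longrightarrow> wsE e \<longrightarrow> frame_holds M Q \<longrightarrow> evf M e Tr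
      \<longrightarrow> frame_holds (M \<circ> primec) Q')"

lemma frame_consec_antimono:
  "Q \<subseteq> Q' \<Longrightarrow> frame_consec Tr Q P \<Longrightarrow> frame_consec Tr Q' P"
  unfolding frame_consec_def using frame_holds_antimono by blast

definition frame_excludes :: "fm \<Rightarrow> frame \<Rightarrow> bool" where
  "frame_excludes Bad Q \<longleftrightarrow> (\<forall>M e. wsM M \<longrightarrow> wsE e \<longrightarrow> frame_holds M Q \<longrightarrow> \<not> evf M e Bad)"

lemma frame_excludes_mono: "Q \<subseteq> Q' \<Longrightarrow> frame_excludes Bad Q \<Longrightarrow> frame_excludes Bad Q'"
  unfolding frame_excludes_def using frame_holds_antimono by blast

lemma T_valid_Init_forallQ:
  assumes "finite Q" "\<forall>(l, \<sigma>)\<in>Q. T_valid (Imp Init (allc l))"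
  shows "T_valid (Imp Init (conjs (forallQ Q)))"
  using assms by (fastforce simp: T_valid_def evf_forallQ frame_holds_def T_models_def evf_allc)

lemma T_valid_consec_forallQ:
  assumes "finite Q" "finite Q'" "frame_consec Tr Q Q'"
  shows "T_valid (Imp (And (conjs (forallQ Q)) Tr) (prime (conjs (forallQ Q'))))"
  using assms by (auto simp: T_valid_def frame_consec_def evf_forallQ evf_prime)

lemma T_valid_excludes_forallQ:
  assumes "finite Q" "frame_excludes Bad Q"
  shows "T_valid (Imp (conjs (forallQ Q)) (Neg Bad))"
  using assms by (auto simp: T_valid_def frame_excludes_def evf_forallQ)

section \<open>Abstraction of constants and Skolemization\<close>

lemma is_abs_qfree_cf:
  assumes "fm_ground \<phi>" "is_abs U \<phi> (\<psi>, \<sigma>)"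
  shows "qfree \<psi>" "cf \<psi> \<subseteq> cf \<phi> - U"
proof -
  from assms(2) obtain \<rho> where "\<psi> = replf (\<lambda>c. if c \<in> U then Some (\<rho> c) else None) \<phi>"
    and "cf \<psi> \<inter> U = {}"
    unfolding is_abs_def prod.case by blast
  with assms(1) cf_replf show "qfree \<psi>" "cf \<psi> \<subseteq> cf \<phi> - U"
    by (auto simp: fm_ground_def)
qed

lemma subst_replf_fv:
  assumes "qfree p" "subst \<sigma> (replf \<rho> p) = p" "v \<in> fv (replf \<rho> p)" "v \<notin> fv p"
  shows "\<exists>c\<in>cf p. \<rho> c = Some v \<and> \<sigma> v = Some (Cst c)"
proof -
  have "substt \<sigma> (replt \<rho> t) = t \<Longrightarrow> v \<in> fvt (replt \<rho> t) \<Longrightarrow> v \<notin> fvt t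
      \<Longrightarrow> \<exists>c\<in>ct t. \<rho> c = Some v \<and> \<sigma> v = Some (Cst c)" for t
    by (induction t) (auto split: option.splits)
  with assms show ?thesis
    by (induction p) auto
qed

lemma is_abs_fv:
  assumes "fm_ground \<phi>" "is_abs U \<phi> (\<psi>, \<sigma>)" "v \<in> fv \<psi>"
  obtains c where "c \<in> cf \<phi>" "c \<in> U" "\<sigma> v = Some (Cst c)" "vsort v = csort c"
    "\<And>i. c = Sk i \<Longrightarrow> v = IV i"
proof -
  obtain \<rho> where \<rho>: "\<forall>c\<in>U. vsort (\<rho> c) = csort c" "\<forall>i. Sk i \<in> U \<longrightarrow> \<rho> (Sk i) = IV i"
    and \<psi>: "\<psi> = replf (\<lambda>c. if c \<in> U then Some (\<rho> c) else None) \<phi>" and "subst \<sigma> \<psi> = \<phi>"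
    using assms(2) unfolding is_abs_def prod.case by blast
  with assms(1,3) obtain c where "c \<in> cf \<phi>" "c \<in> U" "\<rho> c = v" "\<sigma> v = Some (Cst c)"
    using subst_replf_fv[of \<phi> \<sigma> _ v] by (fastforce simp: fm_ground_def split: if_splits)
  with \<rho> show thesis
    by (intro that) auto
qed

definition skolem_model :: "(cnst \<Rightarrow> val) \<Rightarrow> (var \<Rightarrow> val) \<Rightarrow> cnst \<Rightarrow> val" where
  "skolem_model M e c = (case c of Sk i \<Rightarrow> e (IV i) | _ \<Rightarrow> M c)"

lemma wsM_skolem_model: "wsM M \<Longrightarrow> wsE e \<Longrightarrow> wsM (skolem_model M e)"
  unfolding wsM_def wsE_def skolem_model_def
  by (metis cnst.exhaust cnst.simps(10-12) csort.simps(3) vsort.simps(1))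

lemma evf_is_abs_SKs:
  assumes "fm_ground \<phi>" "is_abs SKs \<phi> (\<psi>, \<sigma>)"
  shows "evf M e \<psi> = evf (skolem_model M e) e \<phi>"
proof -
  obtain \<rho> where \<rho>: "\<forall>i. \<rho> (Sk i) = IV i"
    and \<psi>: "\<psi> = replf (\<lambda>c. if c \<in> SKs then Some (\<rho> c) else None) \<phi>"
    using assms(2) by (auto simp: is_abs_def SKs_def)
  have "(\<lambda>c. case if c \<in> SKs then Some (\<rho> c) else None of Some v \<Rightarrow> e v | None \<Rightarrow> M c)
      = skolem_model M e"
    using \<rho> by (auto simp: skolem_model_def SKs_def split: cnst.split)
  then show ?thesis
    using assms(1) \<psi> evf_replf by (simp add: fm_ground_def)
qed

lemma
  assumes "qfree m" "\<forall>v\<in>fv m. vsort v = SInt"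
  shows fm_ground_msk: "fm_ground (msk m)"
    and cf_msk: "cf (msk m) = primec ` cf m \<union> {Sk i |i. IV i \<in> fv m}"
proof -
  have int: "\<forall>v\<in>fv m. \<exists>i. v = IV i"
    using assms(2) by (metis vsort.elims srt.distinct(1))
  have "qfree (prime m)" "fv (prime m) = fv m" "cf (prime m) = primec ` cf m"
    using assms(1) by (simp_all add: prime_def cf_mapcf)
  then show "fm_ground (msk m)" "cf (msk m) = primec ` cf m \<union> {Sk i |i. IV i \<in> fv m}"
    using int by (auto simp: fm_ground_def msk_def fv_subst cf_subst sk_def)
qed

lemma cf_msk_subset:
  assumes "wf_inst X m \<sigma>" "\<forall>v\<in>fv m. vsort v = SInt"
  shows "cf (msk m) \<subseteq> primec ` X \<union> SKs"
  using assms cf_msk[of m] unfolding wf_inst_def SKs_def by blast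

lemma itp_specD:
  assumes "itp_spec itp" "fm_ground A" "fm_ground B" "T_unsat (And A B)" "itp A B = Some I"
  shows "fm_ground I" "cf I \<subseteq> cf A \<inter> cf B" "T_valid (Imp A I)"
proof -
  have "case itp A B of None \<Rightarrow> True | Some I \<Rightarrow> fm_ground I \<and> wff I \<and> cf I \<subseteq> cf A \<inter> cf B
      \<and> T_valid (Imp A I) \<and> T_valid (Imp I (Neg B))"
    using assms(1-4) unfolding itp_spec_def by blast
  with assms(5) show "fm_ground I" "cf I \<subseteq> cf A \<inter> cf B" "T_valid (Imp A I)"
    by simp_all
qed

lemma pmbp_specD:
  assumes "pmbp_spec absf pmbp" "fm_ground \<phi>" "wsM M" "T_models M \<phi>" "pmbp U \<phi> M = Some (\<psi>, W)"
  shows "fm_ground \<psi>" "W \<subseteq> U" "cf \<psi> \<subseteq> cf \<phi> - (U - W)" "\<forall>c\<in>W. csort c = SInt"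
proof -
  have "case pmbp U \<phi> M of None \<Rightarrow> True
      | Some (\<psi>, W) \<Rightarrow> monomial \<psi> \<and> fm_ground \<psi> \<and> wff \<psi> \<and> W \<subseteq> U
          \<and> cf \<psi> \<subseteq> cf \<phi> - (U - W) \<and> T_valid (Imp \<psi> (exq absf (U - W) \<phi>))
          \<and> T_models M \<psi> \<and> (\<forall>c\<in>W. csort c = SInt)"
    using assms(1-4) unfolding pmbp_spec_def by blast
  with assms(5) show "fm_ground \<psi>" "W \<subseteq> U" "cf \<psi> \<subseteq> cf \<phi> - (U - W)" "\<forall>c\<in>W. csort c = SInt"
    by simp_all
qed

section \<open>Abstracted interpolants as lemmas\<close>

context
  fixes X :: "cnst set" and L' l :: fm and \<tau> :: subst
  assumes X: "\<forall>c\<in>X. \<exists>s n. c = Cn s n"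
    and L': "fm_ground L'" and l: "is_abs SKs (unprime L') (l, \<tau>)"
begin

lemma abstracted_interpolant_consts:
  assumes L'_consts: "cf L' \<subseteq> primec ` X \<union> SKs"
  shows "cf l \<subseteq> X"
proof
  fix c assume "c \<in> cf l"
  then obtain c' where c': "c' \<in> cf L'" "c = unprimec c'" "c \<notin> SKs"
    using is_abs_qfree_cf(2)[OF _ l] L' cf_unprime by (auto simp: unprime_def)
  then have "c' \<notin> SKs"
    by (auto simp: SKs_def unprimec_eq_Sk_iff)
  then obtain x where "x \<in> X" "c' = primec x"
    using L'_consts c'(1) by blast
  moreover obtain s n where "x = Cn s n"
    using X \<open>x \<in> X\<close> by blast
  ultimately show "c \<in> X"
    using c' by simp
qed

lemma abstracted_interpolant_ground_inst:
  assumes m: "wf_inst X m \<sigma>" "\<forall>v\<in>fv m. vsort v = SInt" and L'_consts: "cf L' \<subseteq> cf (msk m)"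
  shows "ground_inst l \<sigma>"
  unfolding ground_inst_def
proof
  fix v assume "v \<in> fv l"
  obtain c where "c \<in> cf (unprime L')" "c \<in> SKs" "\<And>i. c = Sk i \<Longrightarrow> v = IV i"
    using is_abs_fv[OF _ l \<open>v \<in> fv l\<close>] L' by (auto simp: unprime_def)
  then obtain i where "Sk i \<in> cf (unprime L')" "v = IV i"
    by (auto simp: SKs_def)
  then obtain c' where "c' \<in> cf L'" "unprimec c' = Sk i"
    using cf_unprime by auto
  then have "Sk i \<in> cf (msk m)"
    using L'_consts by (simp add: unprimec_eq_Sk_iff subset_iff)
  moreover have "Sk i \<notin> primec ` cf m"
    using X m(1) by (fastforce simp: wf_inst_def)
  ultimately have "IV i \<in> fv m"
    using cf_msk[of m] m by (auto simp: wf_inst_def)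
  then show "\<exists>c. \<sigma> v = Some (Cst c) \<and> csort c = vsort v"
    using m(1) \<open>v = IV i\<close> unfolding wf_inst_def ground_inst_def by (metis vsort.simps(1))
qed

lemma abstracted_interpolant_wf_inst:
  assumes m: "wf_inst X m \<sigma>" "\<forall>v\<in>fv m. vsort v = SInt" and L'_consts: "cf L' \<subseteq> cf (msk m)"
  shows "wf_inst X l \<sigma>"
  using is_abs_qfree_cf(1)[OF _ l] L' abstracted_interpolant_consts[OF subset_trans[OF L'_consts cf_msk_subset[OF m]]]
    abstracted_interpolant_ground_inst[OF m L'_consts]
  by (simp add: wf_inst_def unprime_def)

text \<open>The Skolem constants of L' are the free variables of l, so evaluating l under e' is
  evaluating L' in skolem_model M e', a model of A that agrees with M on both states.\<close>

lemma abstracted_interpolant_holds: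
  assumes L'_consts: "cf L' \<subseteq> primec ` X \<union> SKs" and A_L': "T_valid (Imp A L')"
    and M: "wsM M" "wsE e" and A: "\<And>e'. wsE e' \<Longrightarrow> evf (skolem_model M e') e A"
  shows "T_models (M \<circ> primec) l"
  unfolding T_models_def
proof (intro allI impI)
  fix e' assume e': "wsE e'"
  have "evf (skolem_model M e') e L'"
    using A_L' A[OF e'] wsM_skolem_model[OF M(1) e'] M(2) by (simp add: T_valid_def)
  moreover have "evf (skolem_model M e') e L' = evf (skolem_model (M \<circ> primec) e' \<circ> unprimec) e' L'"
  proof (rule evf_cong)
    show "\<forall>c\<in>cf L'. skolem_model M e' c = (skolem_model (M \<circ> primec) e' \<circ> unprimec) c"
      using L'_consts X by (fastforce simp: skolem_model_def SKs_def)
  qed (use L' in \<open>simp add: fm_ground_def\<close>)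
  moreover have "evf (M \<circ> primec) e' l = evf (skolem_model (M \<circ> primec) e' \<circ> unprimec) e' L'"
    using evf_is_abs_SKs[OF _ l] L' by (simp add: unprime_def evf_mapcf)
  ultimately show "evf (M \<circ> primec) e' l"
    by simp
qed

lemma abstracted_interpolant_initiation:
  assumes L'_consts: "cf L' \<subseteq> primec ` X \<union> SKs" and A_L': "T_valid (Imp (Ftr Init Tr Q) L')"
    and Init: "fm_ground Init" "cf Init \<subseteq> X"
  shows "T_valid (Imp Init (allc l))"
  unfolding T_valid_def evf.simps
proof (intro allI impI)
  fix M e assume M: "wsM M" "wsE e" "evf M e Init"
  \<comment> \<open>The post-state of M \<circ> unprimec is M, so it satisfies the disjunct Init' of F.\<close>
  have "evf (skolem_model (M \<circ> unprimec) e') e (Ftr Init Tr Q)" for e'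
  proof -
    have "(skolem_model (M \<circ> unprimec) e' \<circ> primec) c = M c" if c: "c \<in> cf Init" for c
    proof -
      obtain s n where "c = Cn s n"
        using Init(2) X c by blast
      then show ?thesis
        by (simp add: skolem_model_def)
    qed
    then have "evf (skolem_model (M \<circ> unprimec) e' \<circ> primec) e Init = evf M e Init"
      using Init(1) by (intro evf_cong) (auto simp: fm_ground_def)
    with M(3) show ?thesis
      by (simp add: Ftr_def evf_prime)
  qed
  then have "T_models (M \<circ> unprimec \<circ> primec) l"
    using abstracted_interpolant_holds[OF L'_consts A_L' wsM_comp_unprimec[OF M(1)] M(2)] by blast
  moreover have "evf (M \<circ> unprimec \<circ> primec) e' l = evf M e' l" for e'
    using abstracted_interpolant_consts[OF L'_consts] X by (intro evf_cong) fastforce+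
  ultimately show "evf M e (allc l)"
    by (simp add: evf_allc[OF M(2)] T_models_def)
qed

lemma abstracted_interpolant_consecution:
  assumes L'_consts: "cf L' \<subseteq> primec ` X \<union> SKs" and A_L': "T_valid (Imp (Ftr Init Tr (qi Q)) L')"
    and Q: "finite Q" "\<forall>(l, \<sigma>)\<in>Q. wf_inst X l \<sigma>" and Tr: "cf Tr \<subseteq> X \<union> primec ` X"
  shows "frame_consec Tr Q {(l, \<sigma>)}"
  unfolding frame_consec_def
proof (intro allI impI)
  fix M e assume M: "wsM M" "wsE e" "frame_holds M Q" "evf M e Tr"
  have "evf (skolem_model M e') e (Ftr Init Tr (qi Q))" if e': "wsE e'" for e'
  proof -
    have agree: "\<forall>c\<in>X \<union> primec ` X. skolem_model M e' c = M c"
      using X by (auto simp: skolem_model_def)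
    moreover have "\<forall>(l, \<sigma>)\<in>Q. cf l \<subseteq> X"
      using Q(2) by (auto simp: wf_inst_def)
    ultimately have "frame_holds (skolem_model M e') Q"
      using M(3) frame_holds_cong[of Q X "skolem_model M e'" M] by simp
    then have "evf (skolem_model M e') e (qi Q)"
      using evf_qi Q wsM_skolem_model[OF M(1) e'] M(2) by (fastforce simp: wf_inst_def)
    moreover have "\<forall>c\<in>cf Tr. skolem_model M e' c = M c"
      using agree Tr by blast
    then have "evf (skolem_model M e') e Tr"
      using M(4) evf_cong[of Tr "skolem_model M e'" M e e] by simp
    ultimately show ?thesis
      by (simp add: Ftr_def)
  qed
  then show "frame_holds (M \<circ> primec) {(l, \<sigma>)}"
    using abstracted_interpolant_holds[OF L'_consts A_L' M(1,2)] by (simp add: frame_holds_def)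
qed

end

section \<open>An inductive invariant of Quic3\<close>

definition quic3_inv :: "cnst set \<Rightarrow> fm \<Rightarrow> fm \<Rightarrow> fm \<Rightarrow> q3state \<Rightarrow> bool" where
  "quic3_inv X Init Tr Bad s \<longleftrightarrow>
     (\<forall>j. finite (frm s j) \<and> frm s (Suc j) \<subseteq> frm s j)
   \<and> (\<forall>j. \<forall>(l, \<sigma>)\<in>frm s j. wf_inst X l \<sigma> \<and> T_valid (Imp Init (allc l)))
   \<and> (\<forall>j. frame_consec Tr (frm s j) (frm s (Suc j)))
   \<and> (\<forall>j<lvl s. frame_excludes Bad (frm s j))
   \<and> (\<forall>(m, \<sigma>, i)\<in>pobs s. wf_inst X m \<sigma> \<and> (\<forall>v\<in>fv m. vsort v = SInt))"

context
  fixes X :: "cnst set" and Init Tr Bad :: fm and s :: q3state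
  assumes inv: "quic3_inv X Init Tr Bad s"
begin

lemma quic3_inv_finite: "finite (frm s j)"
  using inv by (simp add: quic3_inv_def)

lemma quic3_inv_antimono: "j \<le> i \<Longrightarrow> frm s i \<subseteq> frm s j"
  using inv lift_Suc_antimono_le[of "frm s" j i] by (simp add: quic3_inv_def)

lemma quic3_inv_frame_lemma: "(l, \<sigma>) \<in> frm s j \<Longrightarrow> wf_inst X l \<sigma> \<and> T_valid (Imp Init (allc l))"
  using inv by (fastforce simp: quic3_inv_def)

lemma quic3_inv_wf_inst: "\<forall>(l, \<sigma>)\<in>frm s j. wf_inst X l \<sigma>"
  using quic3_inv_frame_lemma by fast

lemma quic3_inv_ground_inst: "\<forall>(l, \<sigma>)\<in>frm s j. qfree l \<and> ground_inst l \<sigma>"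
  using quic3_inv_wf_inst by (fastforce simp: wf_inst_def)

lemma quic3_inv_consec: "frame_consec Tr (frm s j) (frm s (Suc j))"
  using inv by (simp add: quic3_inv_def)

lemma quic3_inv_excludes: "j < lvl s \<Longrightarrow> frame_excludes Bad (frm s j)"
  using inv by (simp add: quic3_inv_def)

lemma quic3_inv_pob: "(m, \<sigma>, i) \<in> pobs s \<Longrightarrow> wf_inst X m \<sigma> \<and> (\<forall>v\<in>fv m. vsort v = SInt)"
  using inv by (fastforce simp: quic3_inv_def)

end

lemma quic3_inv_interp_seq:
  assumes inv: "quic3_inv X Init Tr Bad s" and k: "1 \<le> k" "k < lvl s"
  shows "interp_seq X Init Tr Bad k (\<lambda>j. conjs (forallQ (frm s j)))"
  unfolding interp_seq_def
proof (intro conjI allI impI ballI)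
  fix j
  show "cf (conjs (forallQ (frm s j))) \<subseteq> X"
    using quic3_inv_frame_lemma[OF inv] by (fastforce simp: cf_forallQ[OF quic3_inv_finite[OF inv]] wf_inst_def)
  show "T_valid (Imp (And (conjs (forallQ (frm s j))) Tr) (prime (conjs (forallQ (frm s (Suc j))))))"
    using inv by (simp add: T_valid_consec_forallQ quic3_inv_finite quic3_inv_consec)
next
  show "T_valid (Imp Init (conjs (forallQ (frm s 1))))"
    using quic3_inv_frame_lemma[OF inv] by (fastforce intro: T_valid_Init_forallQ quic3_inv_finite[OF inv])
  show "T_valid (Imp (conjs (forallQ (frm s k))) (Neg Bad))"
    using inv k by (simp add: T_valid_excludes_forallQ quic3_inv_finite quic3_inv_excludes)
qed

lemma quic3_inv_init:
  assumes "safety_problem X Init Tr Bad"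
  shows "quic3_inv X Init Tr Bad (q3init Init)"
proof -
  have Init: "qfree Init" "fv Init = {}" "cf Init \<subseteq> X"
    using assms by (auto simp: safety_problem_def fm_ground_def)
  then have "evf M e Init \<Longrightarrow> evf M e' Init" for M e e'
    using evf_cong[of Init M M e e'] by simp
  then have "T_valid (Imp Init (allc Init))"
    by (auto simp: T_valid_def evf_allc)
  with Init show ?thesis
    by (auto simp: quic3_inv_def q3init_def wf_inst_def ground_inst_def frame_consec_def
        frame_holds_def)
qed

lemma quic3_inv_insert_pob:
  assumes "quic3_inv X Init Tr Bad s" "wf_inst X m \<sigma>" "\<forall>v\<in>fv m. vsort v = SInt"
  shows "quic3_inv X Init Tr Bad (s\<lparr>pobs := insert (m, \<sigma>, i) (pobs s)\<rparr>)"
  using assms by (simp add: quic3_inv_def)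

lemma quic3_inv_unfold:
  assumes inv: "quic3_inv X Init Tr Bad s" and safe: "T_valid (Imp (qi (frm s (lvl s))) (Neg Bad))"
  shows "quic3_inv X Init Tr Bad (s\<lparr>lvl := Suc (lvl s)\<rparr>)"
proof -
  have "frame_excludes Bad (frm s (lvl s))"
    unfolding frame_excludes_def
  proof (intro allI impI)
    fix M e assume M: "wsM M" "wsE e" "frame_holds M (frm s (lvl s))"
    then have "evf M e (qi (frm s (lvl s)))"
      by (rule evf_qi[OF quic3_inv_finite[OF inv] quic3_inv_ground_inst[OF inv]])
    with safe M show "\<not> evf M e Bad"
      by (simp add: T_valid_def)
  qed
  with inv show ?thesis
    unfolding quic3_inv_def by (simp add: All_less_Suc)
qed

lemma frm_addlem: "frm (addlem s i x) j = (if j \<le> Suc i then insert x (frm s j) else frm s j)"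
  by (simp add: addlem_def)

lemma quic3_inv_addlem:
  assumes inv: "quic3_inv X Init Tr Bad s"
    and wf: "wf_inst X l \<sigma>" and init: "T_valid (Imp Init (allc l))"
    and consec: "frame_consec Tr (insert (l, \<sigma>) (frm s i)) {(l, \<sigma>)}"
  shows "quic3_inv X Init Tr Bad (addlem s i (l, \<sigma>))"
  \<comment> \<open>Consecution is needed at level i only, since the lower frames contain frm s i.\<close>
proof -
  let ?s' = "addlem s i (l, \<sigma>)"
  have old: "frm s j \<subseteq> frm ?s' j" for j
    by (auto simp: frm_addlem)
  have "frame_consec Tr (frm ?s' j) (frm ?s' (Suc j))" for j
    unfolding frame_consec_def
  proof (intro allI impI)
    fix M e assume M: "wsM M" "wsE e" "frame_holds M (frm ?s' j)" "evf M e Tr"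
    then have "frame_holds (M \<circ> primec) (frm s (Suc j))"
      using quic3_inv_consec[OF inv] frame_holds_antimono[OF old] by (simp add: frame_consec_def)
    moreover have "T_models (M \<circ> primec) l" if "j \<le> i"
    proof -
      have "insert (l, \<sigma>) (frm s i) \<subseteq> frm ?s' j"
        using quic3_inv_antimono[OF inv that] that by (auto simp: frm_addlem)
      then show ?thesis
        using consec M frame_holds_antimono by (simp add: frame_consec_def frame_holds_def) blast
    qed
    ultimately show "frame_holds (M \<circ> primec) (frm ?s' (Suc j))"
      by (auto simp: frm_addlem frame_holds_def)
  qed
  with inv wf init show ?thesis
    using frame_excludes_mono[OF old]
    by (auto simp: quic3_inv_def frm_addlem addlem_def)
qed

lemma quic3_inv_push:
  assumes inv: "quic3_inv X Init Tr Bad s" and lemma_i: "(Or \<phi> \<psi>, \<sigma>) \<in> frm s i"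
    and init: "T_valid (Imp Init (allc \<phi>))"
    and ind: "T_valid (Imp (And (allc \<phi>) (And (conjs (forallQ (frm s i))) (And (qi (frm s i)) Tr)))
                        (prime (allc \<phi>)))"
  shows "quic3_inv X Init Tr Bad (addlem s i (\<phi>, \<sigma>))"
proof (rule quic3_inv_addlem[OF inv _ init])
  show "wf_inst X \<phi> \<sigma>"
    using quic3_inv_frame_lemma[OF inv lemma_i] by (auto simp: wf_inst_def ground_inst_def)
  show "frame_consec Tr (insert (\<phi>, \<sigma>) (frm s i)) {(\<phi>, \<sigma>)}"
    unfolding frame_consec_def
  proof (intro allI impI)
    fix M e assume M: "wsM M" "wsE e" "frame_holds M (insert (\<phi>, \<sigma>) (frm s i))" "evf M e Tr"
    have "frame_holds M (frm s i)"
      using M(3) frame_holds_antimono by blast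
    then have "evf M e (conjs (forallQ (frm s i)))" "evf M e (qi (frm s i))"
      using evf_forallQ[OF quic3_inv_finite[OF inv] M(2)]
        evf_qi[OF quic3_inv_finite[OF inv] quic3_inv_ground_inst[OF inv] M(1,2)] by simp_all
    moreover have "evf M e (allc \<phi>)"
      using M(2,3) by (simp add: evf_allc frame_holds_def T_models_def)
    ultimately have "evf (M \<circ> primec) e (allc \<phi>)"
      using ind M by (simp add: T_valid_def evf_prime)
    then show "frame_holds (M \<circ> primec) {(\<phi>, \<sigma>)}"
      using M(2) by (simp add: evf_allc frame_holds_def T_models_def)
  qed
qed

lemma quic3_inv_newlemma:
  assumes P: "safety_problem X Init Tr Bad" and abs: "abs_spec absf" and itp: "itp_spec itp"
    and inv: "quic3_inv X Init Tr Bad s" and pob: "(m, \<sigma>, Suc i) \<in> pobs s"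
    and unsat: "T_unsat (And (Ftr Init Tr (qi (frm s i))) (msk m))"
    and L': "itp (Ftr Init Tr (qi (frm s i))) (msk m) = Some L'"
    and l: "absf SKs (unprime L') = (l, \<tau>)"
  shows "quic3_inv X Init Tr Bad (addlem s i (l, \<sigma>))"
proof -
  let ?A = "Ftr Init Tr (qi (frm s i))"
  have X: "\<forall>c\<in>X. \<exists>s n. c = Cn s n" and Init: "fm_ground Init" "cf Init \<subseteq> X"
    and Tr: "fm_ground Tr" "cf Tr \<subseteq> X \<union> primec ` X"
    using P by (simp_all add: safety_problem_def)
  have m: "wf_inst X m \<sigma>" "\<forall>v\<in>fv m. vsort v = SInt"
    using quic3_inv_pob[OF inv pob] by auto
  have A_ground: "fm_ground ?A"
    using fm_ground_qi[OF quic3_inv_finite[OF inv] quic3_inv_ground_inst[OF inv]] Init Tr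
    by (simp add: Ftr_def fm_ground_def prime_def)
  have msk_ground: "fm_ground (msk m)"
    using m fm_ground_msk by (simp add: wf_inst_def)
  note L'_spec = itp_specD[OF itp A_ground msk_ground unsat L']
  have L'_ground: "fm_ground L'" and L'_consts: "cf L' \<subseteq> cf (msk m)"
    and A_L': "T_valid (Imp ?A L')"
    using L'_spec by auto
  have l_abs: "is_abs SKs (unprime L') (l, \<tau>)"
    using abs l L'_ground by (metis abs_spec_def fm_ground_mapcf unprime_def)
  have L'_consts': "cf L' \<subseteq> primec ` X \<union> SKs"
    using L'_consts cf_msk_subset[OF m] by blast
  have wf: "wf_inst X l \<sigma>"
    using abstracted_interpolant_wf_inst[OF X L'_ground l_abs m L'_consts] .
  have "T_valid (Imp Init (allc l))"
    by (rule abstracted_interpolant_initiation[OF X L'_ground l_abs L'_consts' A_L' Init])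
  moreover have "frame_consec Tr (frm s i) {(l, \<sigma>)}"
    by (rule abstracted_interpolant_consecution[OF X L'_ground l_abs L'_consts' A_L'
          quic3_inv_finite[OF inv] quic3_inv_wf_inst[OF inv] Tr(2)])
  then have "frame_consec Tr (insert (l, \<sigma>) (frm s i)) {(l, \<sigma>)}"
    by (rule frame_consec_antimono[OF subset_insertI])
  ultimately show ?thesis
    using quic3_inv_addlem[OF inv wf] by blast
qed

lemma quic3_inv_predecessor:
  assumes P: "safety_problem X Init Tr Bad" and abs: "abs_spec absf" and pmbp: "pmbp_spec absf pmbp"
    and inv: "quic3_inv X Init Tr Bad s" and pob: "(m, \<xi>, Suc i) \<in> pobs s"
    and M: "wsM M" "T_models M (And (qi (frm s i)) (And Tr (msk m)))"
    and proj: "pmbp (primec ` X \<union> SKs) (And Tr (msk m)) M = Some (\<phi>, W)"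
    and abstraction: "absf W \<phi> = (\<psi>, \<sigma>)"
  shows "quic3_inv X Init Tr Bad (s\<lparr>pobs := insert (\<psi>, \<sigma>, i) (pobs s)\<rparr>)"
proof -
  have Tr: "fm_ground Tr" "cf Tr \<subseteq> X \<union> primec ` X"
    using P by (simp_all add: safety_problem_def)
  have m: "wf_inst X m \<xi>" "\<forall>v\<in>fv m. vsort v = SInt"
    using quic3_inv_pob[OF inv pob] by auto
  from Tr(2) cf_msk_subset[OF m] have Tr_msk_consts: "cf (And Tr (msk m)) \<subseteq> X \<union> (primec ` X \<union> SKs)"
    by auto
  have "fm_ground (And Tr (msk m))"
    using Tr(1) fm_ground_msk[of m] m by (simp add: fm_ground_def wf_inst_def)
  moreover have "T_models M (And Tr (msk m))"
    using M(2) by (simp add: T_models_def)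
  ultimately have \<phi>: "fm_ground \<phi>" "W \<subseteq> primec ` X \<union> SKs"
    "cf \<phi> \<subseteq> cf (And Tr (msk m)) - (primec ` X \<union> SKs - W)" "\<forall>c\<in>W. csort c = SInt"
    using pmbp_specD[OF pmbp _ M(1) _ proj] by blast+
  have \<psi>_abs: "is_abs W \<phi> (\<psi>, \<sigma>)"
    using abs \<phi>(1) abstraction by (metis abs_spec_def)
  have "cf \<psi> \<subseteq> X"
    using is_abs_qfree_cf(2)[OF \<phi>(1) \<psi>_abs] \<phi>(3) Tr_msk_consts by blast
  moreover have "vsort v = SInt \<and> (\<exists>c. \<sigma> v = Some (Cst c) \<and> csort c = vsort v)" if "v \<in> fv \<psi>" for v
    using is_abs_fv[OF \<phi>(1) \<psi>_abs that] \<phi>(4) by metis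
  then have "ground_inst \<psi> \<sigma>" "\<forall>v\<in>fv \<psi>. vsort v = SInt"
    unfolding ground_inst_def by blast+
  ultimately have "wf_inst X \<psi> \<sigma>" "\<forall>v\<in>fv \<psi>. vsort v = SInt"
    using is_abs_qfree_cf(1)[OF \<phi>(1) \<psi>_abs] by (simp_all add: wf_inst_def)
  then show ?thesis
    by (rule quic3_inv_insert_pob[OF inv])
qed

lemma quic3_inv_step:
  assumes "safety_problem X Init Tr Bad" "abs_spec absf" "pmbp_spec absf pmbp" "itp_spec itp"
    and step: "q3step X Init Tr Bad absf pmbp itp s s'" and inv: "quic3_inv X Init Tr Bad s"
  shows "quic3_inv X Init Tr Bad s'"
  using step
proof cases
  case Safe
  with inv show ?thesis
    by (simp add: quic3_inv_def)
next
  case Cex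
  with inv show ?thesis
    by (simp add: quic3_inv_def)
next
  case Unfold
  with inv show ?thesis
    by (simp add: quic3_inv_unfold)
next
  case (Candidate m)
  then have "wf_inst X m Map.empty" "\<forall>v\<in>fv m. vsort v = SInt"
    by (auto simp: is_pob_def wf_inst_def ground_inst_def fm_ground_def monomial_qfree)
  with Candidate inv show ?thesis
    by (simp add: quic3_inv_insert_pob)
next
  case Predecessor
  with assms show ?thesis
    by (auto intro: quic3_inv_predecessor)
next
  case NewLemma
  with assms show ?thesis
    by (auto intro: quic3_inv_newlemma)
next
  case Push
  with inv show ?thesis
    by (auto intro: quic3_inv_push)
qed

lemma quic3_inv_reachable:
  assumes "safety_problem X Init Tr Bad" "abs_spec absf" "pmbp_spec absf pmbp" "itp_spec itp"
    and "(q3step X Init Tr Bad absf pmbp itp)\<^sup>*\<^sup>* (q3init Init) s"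
  shows "quic3_inv X Init Tr Bad s"
  using assms(5)
proof (induction rule: rtranclp_induct)
  case base
  show ?case
    by (rule quic3_inv_init[OF assms(1)])
next
  case (step s s')
  then show ?case
    using quic3_inv_step[OF assms(1-4)] by blast
qed

theorem lemma4:
  fixes X :: "cnst set" and Init Tr Bad :: fm
    and absf :: "cnst set \<Rightarrow> fm \<Rightarrow> fm \<times> subst"
    and pmbp :: "cnst set \<Rightarrow> fm \<Rightarrow> (cnst \<Rightarrow> val) \<Rightarrow> (fm \<times> cnst set) option"
    and itp :: "fm \<Rightarrow> fm \<Rightarrow> fm option"
    and s :: q3state and k :: nat
  assumes "safety_problem X Init Tr Bad"
    and "abs_spec absf"
    and "pmbp_spec absf pmbp"
    and "itp_spec itp"
    and "(q3step X Init Tr Bad absf pmbp itp)\<^sup>*\<^sup>* (q3init Init) s"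
    and "1 \<le> k" and "k < lvl s"
  shows "interp_seq X Init Tr Bad k (\<lambda>j. conjs (forallQ (frm s j)))"
  using quic3_inv_interp_seq[OF quic3_inv_reachable[OF assms(1-5)] assms(6,7)] .

end
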